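(* Elements of $\mathcal{C}_2$ cannot in general be reparametrized to elements of $\mathcal{C}_1$: there exist an input space $\mathcal{X}$ with associated graphs, a label set $\mathcal{L}$, fixed unary and pairwise features, and a weight vector $w_1\in\mathcal{C}_2$ such that no $w_2\in\mathcal{C}_1$ is a reparametrization of $w_1$, i.e. for every $w_2\in\mathcal{C}_1$ there is some $x\in\mathcal{X}$ with $\arg\max_{y\in\mathcal{Y}} w_1^\top\psi(x,y)\neq \arg\max_{y\in\mathcal{Y}} w_2^\top\psi(x,y)$.
   Context: Pairwise CRF model. Each input $x\in\mathcal{X}$ comes with a finite graph with vertices $\mathcal{V}_x=(x^k)_k$ and undirected edges $\mathcal{E}_x$. An output $y\in\mathcal{Y}$ is a labeling $(y^k)_k\in\mathcal{L}^{|\mathcal{V}_x|}$ with a finite label set $\mathcal{L}$. Unary features $\phi_u(x^k)\in\mathbb{R}^{d_u}$ and pairwise features $\phi_p(x^k,x^l)\in\mathbb{R}^{d_p}$ are fixed. The weight vector $w$ consists of unary weights $w_\alpha\in\mathbb{R}^{d_u}$ for each $\alpha\in\mathcal{L}$ and pairwise weights $w_{\alpha\beta}\in\mathbb{R}^{d_p}$ for each $(\alpha,\beta)\in\mathcal{L}^2$. The score is $w^\top\psi(x,y)=\sum_{x^k\in\mathcal{V}_x}\langle w_{y^k},\phi_u(x^k)\rangle+\sum_{\{x^k,x^l\}\in\mathcal{E}_x}\langle w_{y^ky^l},\phi_p(x^k,x^l)\rangle$ (equivalently, $\psi$ is built from Kronecker products of one-hot label encodings with the features). Constraint sets: $\mathcal{C}_1=\{w: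 w_{\alpha\alpha}=w_{\beta\beta}=0,\ w_{\alpha\beta}\le 0,\ w_{\beta\alpha}\le 0 \text{ (componentwise) for all } \alpha\neq\beta\in\mathcal{L}\}$ and $\mathcal{C}_2=\{w: w_{\alpha\alpha}\ge 0,\ w_{\beta\beta}\ge 0,\ w_{\alpha\beta}\le 0,\ w_{\beta\alpha}\le 0 \text{ (componentwise) for all } \alpha\neq\beta\in\mathcal{L}\}$. A weight vector $w_1$ is reparametrizable into $w_2$ if $\arg\max_{y\in\mathcal{Y}} w_1^\top\psi(x,y)=\arg\max_{y\in\mathcal{Y}} w_2^\top\psi(x,y)$ for all $x\in\mathcal{X}$; the features are held fixed and only the weights change. *)

theory Defs
  imports Main "HOL-Library.Extended_Real"
begin

text \<open>Input x has vertices 0..<nV x and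
  undirected edges given by E x, each edge {x^k,x^l} represented once as the
  ordered pair (k,l) with k < l.\<close>

definition wf_graphs :: "'x set \<Rightarrow> ('x \<Rightarrow> nat) \<Rightarrow> ('x \<Rightarrow> (nat \<times> nat) set) \<Rightarrow> bool" where
  "wf_graphs X nV E \<longleftrightarrow> (\<forall>x\<in>X. E x \<subseteq> {(k,l). k < l \<and> l < nV x})"

definition labelings :: "nat set \<Rightarrow> nat \<Rightarrow> nat list set" where
  "labelings L n = {y. length y = n \<and> set y \<subseteq> L}"

definition crf_score ::
  "('x \<Rightarrow> nat) \<Rightarrow> ('x \<Rightarrow> (nat \<times> nat) set) \<Rightarrow> nat \<Rightarrow> nat \<Rightarrow>
   ('x \<Rightarrow> nat \<Rightarrow> nat \<Rightarrow> real) \<Rightarrow> ('x \<Rightarrow> nat \<Rightarrow> nat \<Rightarrow> nat \<Rightarrow> real) \<Rightarrow>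
   (nat \<Rightarrow> nat \<Rightarrow> real) \<Rightarrow> (nat \<Rightarrow> nat \<Rightarrow> nat \<Rightarrow> real) \<Rightarrow> 'x \<Rightarrow> nat list \<Rightarrow> real" where
  "crf_score nV E du dp phi_u phi_p wu wp x y =
     (\<Sum>k<nV x. \<Sum>i<du. wu (y ! k) i * phi_u x k i)
   + (\<Sum>(k,l)\<in>E x. \<Sum>i<dp. wp (y ! k) (y ! l) i * phi_p x k l i)"

definition crf_argmax ::
  "nat set \<Rightarrow> ('x \<Rightarrow> nat) \<Rightarrow> ('x \<Rightarrow> (nat \<times> nat) set) \<Rightarrow> nat \<Rightarrow> nat \<Rightarrow>
   ('x \<Rightarrow> nat \<Rightarrow> nat \<Rightarrow> real) \<Rightarrow> ('x \<Rightarrow> nat \<Rightarrow> nat \<Rightarrow> nat \<Rightarrow> real) \<Rightarrow>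
   (nat \<Rightarrow> nat \<Rightarrow> real) \<Rightarrow> (nat \<Rightarrow> nat \<Rightarrow> nat \<Rightarrow> real) \<Rightarrow> 'x \<Rightarrow> nat list set" where
  "crf_argmax L nV E du dp phi_u phi_p wu wp x =
     {y \<in> labelings L (nV x). \<forall>y'\<in>labelings L (nV x).
        crf_score nV E du dp phi_u phi_p wu wp x y' \<le> crf_score nV E du dp phi_u phi_p wu wp x y}"

definition in_C1 :: "nat set \<Rightarrow> nat \<Rightarrow> (nat \<Rightarrow> nat \<Rightarrow> nat \<Rightarrow> real) \<Rightarrow> bool" where
  "in_C1 L dp wp \<longleftrightarrow> (\<forall>a\<in>L. \<forall>b\<in>L. \<forall>i<dp.
      (a = b \<longrightarrow> wp a a i = 0) \<and> (a \<noteq> b \<longrightarrow> wp a b i \<le> 0))"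

definition in_C2 :: "nat set \<Rightarrow> nat \<Rightarrow> (nat \<Rightarrow> nat \<Rightarrow> nat \<Rightarrow> real) \<Rightarrow> bool" where
  "in_C2 L dp wp \<longleftrightarrow> (\<forall>a\<in>L. \<forall>b\<in>L. \<forall>i<dp.
      (a = b \<longrightarrow> wp a a i \<ge> 0) \<and> (a \<noteq> b \<longrightarrow> wp a b i \<le> 0))"

end

theory Submission
  imports Defs
begin

text \<open>Without unary features and with nonnegative pairwise features, a weight in \<open>C\<^sub>1\<close>
  gives every labeling a nonpositive score and every constant labeling the score 0, so all
  constant labelings are maximizers. A weight in \<open>C\<^sub>2\<close> may instead reward agreement on
  one label only: on a single edge with labels 0 and 1, putting weight 1 on the pair (0,0)
  makes the constant labeling 0 the unique maximizer, and the constant labeling 1 is lost.\<close>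

lemma crf_score_without_unary:
  "crf_score nV E 0 dp phi_u phi_p wu wp x y =
     (\<Sum>(k,l)\<in>E x. \<Sum>i<dp. wp (y ! k) (y ! l) i * phi_p x k l i)"
  by (simp add: crf_score_def)

lemma in_C1_pairwise_term_nonpos:
  assumes "in_C1 L dp wp" "a \<in> L" "b \<in> L" "i < dp" "0 \<le> c"
  shows "wp a b i * c \<le> 0"
proof -
  have "wp a b i \<le> 0"
    using assms(1-4) unfolding in_C1_def by (cases "a = b") auto
  then show ?thesis
    using \<open>0 \<le> c\<close> by (simp add: mult_nonpos_nonneg)
qed

lemma wf_graphs_edge_bounds:
  assumes "wf_graphs X nV E" "x \<in> X" "(k,l) \<in> E x"
  shows "k < nV x" "l < nV x"
  using assms unfolding wf_graphs_def by fastforce+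

lemma labelings_nth_mem:
  assumes "y \<in> labelings L n" "k < n"
  shows "y ! k \<in> L"
  using assms unfolding labelings_def by auto

lemma in_C1_constant_labeling_in_crf_argmax:
  assumes graphs: "wf_graphs X nV E" "x \<in> X"
    and C1: "in_C1 L dp wp" and "a \<in> L"
    and phi_p_nonneg: "\<And>k l i. 0 \<le> phi_p x k l i"
  shows "replicate (nV x) a \<in> crf_argmax L nV E 0 dp phi_u phi_p wu wp x"
proof -
  let ?score = "crf_score nV E 0 dp phi_u phi_p wu wp x"
  have "?score (replicate (nV x) a) = 0"
    unfolding crf_score_without_unary
  proof (intro sum.neutral ballI, clarify)
    fix k l
    assume "(k,l) \<in> E x"
    then have "replicate (nV x) a ! k = a" "replicate (nV x) a ! l = a"
      using wf_graphs_edge_bounds[OF graphs] by simp_all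
    moreover have "wp a a i = 0" if "i < dp" for i
      using C1 \<open>a \<in> L\<close> that unfolding in_C1_def by blast
    ultimately show "(\<Sum>i<dp. wp (replicate (nV x) a ! k) (replicate (nV x) a ! l) i
        * phi_p x k l i) = 0"
      by simp
  qed
  moreover have "?score y \<le> 0" if y: "y \<in> labelings L (nV x)" for y
    unfolding crf_score_without_unary
  proof (intro sum_nonpos, clarify, intro sum_nonpos)
    fix k l i
    assume "(k,l) \<in> E x" "i \<in> {..<dp}"
    then show "wp (y ! k) (y ! l) i * phi_p x k l i \<le> 0"
      using wf_graphs_edge_bounds[OF graphs] labelings_nth_mem[OF y]
      by (simp add: in_C1_pairwise_term_nonpos[OF C1] phi_p_nonneg)
  qed
  moreover have "replicate (nV x) a \<in> labelings L (nV x)"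
    using \<open>a \<in> L\<close> by (auto simp: labelings_def)
  ultimately show ?thesis
    unfolding crf_argmax_def by auto
qed

theorem proposition1:
  shows "\<exists>(X :: nat set) (nV :: nat \<Rightarrow> nat) E (L :: nat set) du dp phi_u phi_p wu1 wp1.
     wf_graphs X nV E \<and> finite L \<and> L \<noteq> {} \<and> in_C2 L dp wp1 \<and>
     (\<forall>wu2 wp2. in_C1 L dp wp2 \<longrightarrow>
        (\<exists>x\<in>X. crf_argmax L nV E du dp phi_u phi_p wu1 wp1 x
               \<noteq> crf_argmax L nV E du dp phi_u phi_p wu2 wp2 x))"
proof -
  define X :: "nat set" where "X = {0}"
  define nV :: "nat \<Rightarrow> nat" where "nV = (\<lambda>_. 2)"
  define E :: "nat \<Rightarrow> (nat \<times> nat) set" where "E = (\<lambda>_. {(0,1)})"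
  define L :: "nat set" where "L = {0,1}"
  define phi_u :: "nat \<Rightarrow> nat \<Rightarrow> nat \<Rightarrow> real" where "phi_u = (\<lambda>_ _ _. 0)"
  define phi_p :: "nat \<Rightarrow> nat \<Rightarrow> nat \<Rightarrow> nat \<Rightarrow> real" where "phi_p = (\<lambda>_ _ _ _. 1)"
  define wu1 :: "nat \<Rightarrow> nat \<Rightarrow> real" where "wu1 = (\<lambda>_ _. 0)"
  define wp1 :: "nat \<Rightarrow> nat \<Rightarrow> nat \<Rightarrow> real" where
    "wp1 = (\<lambda>a b i. if a = 0 \<and> b = 0 then 1 else 0)"
  let ?argmax = "crf_argmax L nV E 0 1 phi_u phi_p"
  have graphs: "wf_graphs X nV E"
    by (simp add: wf_graphs_def X_def nV_def E_def)
  have "[1,1] \<notin> ?argmax wu1 wp1 0"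
  proof -
    have "[0,0] \<in> labelings L (nV 0)"
      by (simp add: labelings_def L_def nV_def)
    then show ?thesis
      unfolding crf_argmax_def by (force simp: crf_score_def E_def phi_p_def wp1_def)
  qed
  moreover have "[1,1] \<in> ?argmax wu2 wp2 0" if "in_C1 L 1 wp2" for wu2 wp2
    using in_C1_constant_labeling_in_crf_argmax[OF graphs _ that, of 0 1 phi_p]
    by (simp add: X_def L_def nV_def phi_p_def numeral_2_eq_2)
  ultimately have "\<forall>wu2 wp2. in_C1 L 1 wp2 \<longrightarrow> (\<exists>x\<in>X. ?argmax wu1 wp1 x \<noteq> ?argmax wu2 wp2 x)"
    unfolding X_def by blast
  moreover have "in_C2 L 1 wp1"
    by (simp add: in_C2_def wp1_def)
  moreover have "finite L" "L \<noteq> {}"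
    by (simp_all add: L_def)
  ultimately show ?thesis
    using graphs by (intro exI conjI)
qed

end
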